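(* Let $M\in\mathbb N$, $a_1,\dots,a_M>0$, and functions $\phi_{i,j}$ ($i=1,2$, $j=1,\dots,M$) with $\phi_{i,j}\in\mathcal V_{a_j}$. Let $a:=\sum_{j=1}^Ma_j$ and $b>a$, and set $b_j:=b-\sum_{k\ne j}a_k$. Then $$\theta_b\Big(\prod_{j=1}^M\phi_{1,j},\ \prod_{j=1}^M\phi_{2,j}\Big)\le\sum_{j=1}^M\theta_{b_j}(\phi_{1,j},\phi_{2,j}).$$
   Context: $\mathbb T=\mathbb R/\mathbb Z$. $\mathcal V_a:=\{\psi\in C^2(\mathbb T,(0,\infty)):|\frac d{dx}\log\psi|<a\}$ (so $\mathcal V_a\subset\mathcal V_{a'}$ for $a\le a'$). For $\psi_1,\psi_2\in\mathcal V_a$, $\beta_a(\psi_1,\psi_2):=\inf\{t>0:t\psi_1-\psi_2\in\mathcal V_a\}$ and $\theta_a(\psi_1,\psi_2):=\log\beta_a(\psi_1,\psi_2)+\log\beta_a(\psi_2,\psi_1)$. *)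

theory Defs
  imports "HOL-Analysis.Analysis"
begin

text \<open>Functions on T = R/Z are represented as 1-periodic functions on the reals.
  C^2: twice differentiable everywhere with continuous second derivative.\<close>

definition C2_periodic :: "(real \<Rightarrow> real) \<Rightarrow> bool" where
  "C2_periodic f \<longleftrightarrow> (\<forall>x. f (x + 1) = f x) \<and> (\<forall>x. f differentiable at x)
     \<and> (\<forall>x. deriv f differentiable at x) \<and> continuous_on UNIV (deriv (deriv f))"

definition Vcone :: "real \<Rightarrow> (real \<Rightarrow> real) set" where
  "Vcone a = {\<psi>. C2_periodic \<psi> \<and> (\<forall>x. \<psi> x > 0) \<and> (\<forall>x. \<bar>deriv (\<lambda>y. ln (\<psi> y)) x\<bar> < a)}"

definition beta_cone :: "real \<Rightarrow> (real \<Rightarrow> real) \<Rightarrow> (real \<Rightarrow> real) \<Rightarrow> real" where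
  "beta_cone a \<psi>1 \<psi>2 = Inf {t. t > 0 \<and> (\<lambda>x. t * \<psi>1 x - \<psi>2 x) \<in> Vcone a}"

definition theta_cone :: "real \<Rightarrow> (real \<Rightarrow> real) \<Rightarrow> (real \<Rightarrow> real) \<Rightarrow> real" where
  "theta_cone a \<psi>1 \<psi>2 = ln (beta_cone a \<psi>1 \<psi>2) + ln (beta_cone a \<psi>2 \<psi>1)"

end

theory Submission imports Defs begin

text \<open>Membership in V_a is the pointwise condition |\<psi>'| < a \<psi>. It is preserved by sums and
  positive multiples, and V_a \<cdot> V_c \<subseteq> V_(a+c). Write b = \<Sum> a_j + d, so that b_j = a_j + d.
  Telescoping,
    \<Prod>_(j\<le>n) f_j - \<Prod>_(j\<le>n) g_j = (\<Prod>_(j<n) f_j - \<Prod>_(j<n) g_j) f_n + (\<Prod>_(j<n) g_j) (f_n - g_n),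
  shows that t_j \<phi>_1j - \<phi>_2j \<in> V_(b_j) for all j implies (\<Prod> t_j) \<Prod> \<phi>_1j - \<Prod> \<phi>_2j \<in> V_b.
  Hence \<beta>_b(\<Prod> \<phi>_1j, \<Prod> \<phi>_2j) \<le> \<Prod> \<beta>_(b_j)(\<phi>_1j, \<phi>_2j), likewise with \<phi>_1 and \<phi>_2
  exchanged, and taking logarithms gives the claim. All infima involved are positive and taken
  over nonempty sets; nonemptiness uses d > 0, which leaves room to dominate \<phi>_2j by a large
  multiple of \<phi>_1j.\<close>

lemma C2_periodicI:
  assumes "\<And>x. f (x + 1) = f x" "\<And>x. (f has_real_derivative f' x) (at x)"
    and "\<And>x. (f' has_real_derivative f'' x) (at x)" and "continuous_on UNIV f''"
  shows "C2_periodic f"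
proof -
  have "deriv f = f'" "deriv f' = f''" using assms(2,3) DERIV_imp_deriv by blast+
  then show ?thesis unfolding C2_periodic_def using assms real_differentiable_def by metis
qed

lemma C2_periodicE:
  assumes "C2_periodic f"
  obtains f' f'' where "\<And>x. f (x + 1) = f x" "\<And>x. (f has_real_derivative f' x) (at x)"
    and "\<And>x. (f' has_real_derivative f'' x) (at x)" and "continuous_on UNIV f''"
  using assms unfolding C2_periodic_def by (metis DERIV_deriv_iff_real_differentiable)

lemma C2_periodic_has_derivative: "C2_periodic f \<Longrightarrow> (f has_real_derivative deriv f x) (at x)"
  unfolding C2_periodic_def by (metis DERIV_deriv_iff_real_differentiable)

lemma C2_periodic_continuous: "C2_periodic f \<Longrightarrow> continuous_on UNIV f"
  by (meson C2_periodic_has_derivative DERIV_isCont continuous_at_imp_continuous_on)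

lemma C2_periodic_const: "C2_periodic (\<lambda>x. c)"
  by (rule C2_periodicI[where f' = "\<lambda>x. 0" and f'' = "\<lambda>x. 0"]) auto

lemma C2_periodic_add:
  assumes "C2_periodic f" "C2_periodic g"
  shows "C2_periodic (\<lambda>x. f x + g x)"
proof -
  obtain f1 f2 where "\<And>x. f (x + 1) = f x" "\<And>x. (f has_real_derivative f1 x) (at x)"
    and "\<And>x. (f1 has_real_derivative f2 x) (at x)" and "continuous_on UNIV f2"
    using assms(1) by (elim C2_periodicE) blast
  moreover obtain g1 g2 where "\<And>x. g (x + 1) = g x" "\<And>x. (g has_real_derivative g1 x) (at x)"
    and "\<And>x. (g1 has_real_derivative g2 x) (at x)" and "continuous_on UNIV g2"
    using assms(2) by (elim C2_periodicE) blast
  ultimately show ?thesis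
    by (intro C2_periodicI[where f' = "\<lambda>x. f1 x + g1 x" and f'' = "\<lambda>x. f2 x + g2 x"])
      (auto intro!: derivative_eq_intros continuous_intros)
qed

lemma C2_periodic_mult:
  assumes "C2_periodic f" "C2_periodic g"
  shows "C2_periodic (\<lambda>x. f x * g x)"
proof -
  obtain f1 f2 where pf: "\<And>x. f (x + 1) = f x" and df: "\<And>x. (f has_real_derivative f1 x) (at x)"
    and df1: "\<And>x. (f1 has_real_derivative f2 x) (at x)" and cf2: "continuous_on UNIV f2"
    using assms(1) by (elim C2_periodicE) blast
  obtain g1 g2 where pg: "\<And>x. g (x + 1) = g x" and dg: "\<And>x. (g has_real_derivative g1 x) (at x)"
    and dg1: "\<And>x. (g1 has_real_derivative g2 x) (at x)" and cg2: "continuous_on UNIV g2"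
    using assms(2) by (elim C2_periodicE) blast
  have cont: "continuous_on UNIV f" "continuous_on UNIV f1" "continuous_on UNIV g" "continuous_on UNIV g1"
    using df df1 dg dg1 by (meson DERIV_isCont continuous_at_imp_continuous_on)+
  show ?thesis
  proof (rule C2_periodicI)
    show "f (x + 1) * g (x + 1) = f x * g x" for x using pf pg by simp
    show "((\<lambda>x. f x * g x) has_real_derivative f1 x * g x + f x * g1 x) (at x)" for x
      using df dg by (auto intro!: derivative_eq_intros)
    show "((\<lambda>x. f1 x * g x + f x * g1 x) has_real_derivative
        (f2 x * g x + f1 x * g1 x) + (f1 x * g1 x + f x * g2 x)) (at x)" for x
      using df dg df1 dg1 by (auto intro!: derivative_eq_intros)
  qed (use cont cf2 cg2 in \<open>intro continuous_intros\<close>)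
qed

lemma C2_periodic_cmult: "C2_periodic f \<Longrightarrow> C2_periodic (\<lambda>x. c * f x)"
  using C2_periodic_mult[OF C2_periodic_const] by blast

lemma C2_periodic_diff: "C2_periodic f \<Longrightarrow> C2_periodic g \<Longrightarrow> C2_periodic (\<lambda>x. f x - g x)"
  using C2_periodic_add[of f "\<lambda>x. (-1) * g x"] C2_periodic_cmult[of g "-1"] by simp

lemma periodic_add_of_int:
  fixes f :: "real \<Rightarrow> 'a"
  assumes per: "\<And>x. f (x + 1) = f x"
  shows "f (x + of_int n) = f x"
proof (induction n rule: int_induct[where k = 0])
  case base then show ?case by simp
next
  case (step1 i) then show ?case using per[of "x + of_int i"] by (simp add: add.assoc)
next
  case (step2 i) then show ?case using per[of "x + of_int (i - 1)"] by (simp add: add.assoc)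
qed

lemma periodic_frac:
  fixes f :: "real \<Rightarrow> 'a"
  assumes "\<And>x. f (x + 1) = f x"
  shows "f (frac x) = f x"
  using periodic_add_of_int[of f, OF assms, of x "- \<lfloor>x\<rfloor>"] by (simp add: frac_def)

lemma periodic_ratio_bounded:
  fixes f g :: "real \<Rightarrow> real"
  assumes per: "\<And>x. f (x + 1) = f x" "\<And>x. g (x + 1) = g x"
    and cont: "continuous_on UNIV f" "continuous_on UNIV g" and gpos: "\<And>x. g x > 0"
  shows "\<exists>K>0. \<forall>x. f x \<le> K * g x"
proof -
  have cont_ratio: "continuous_on {0..1} (\<lambda>x. f x / g x)"
    using cont gpos continuous_on_subset[of UNIV] by (metis continuous_on_divide less_irrefl subset_UNIV)
  then obtain z where z: "\<forall>y\<in>{0..1}. f y / g y \<le> f z / g z"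
    using continuous_attains_sup[OF compact_Icc _ cont_ratio] by auto
  have "f x \<le> max 1 (f z / g z) * g x" for x
  proof -
    have "f x / g x = f (frac x) / g (frac x)" using periodic_frac per by metis
    also have "\<dots> \<le> f z / g z" using z frac_lt_1[of x] by auto
    finally have "f x \<le> f z / g z * g x" using gpos[of x] by (simp add: divide_le_eq)
    also have "\<dots> \<le> max 1 (f z / g z) * g x" using gpos[of x] by (intro mult_right_mono) auto
    finally show ?thesis .
  qed
  then show ?thesis by (meson zero_less_one less_max_iff_disj)
qed

lemma mem_Vcone_iff:
  "\<psi> \<in> Vcone a \<longleftrightarrow> C2_periodic \<psi> \<and> (\<forall>x. \<psi> x > 0) \<and> (\<forall>x. \<bar>deriv \<psi> x\<bar> < a * \<psi> x)"
proof -
  have "\<bar>deriv (\<lambda>y. ln (\<psi> y)) x\<bar> < a \<longleftrightarrow> \<bar>deriv \<psi> x\<bar> < a * \<psi> x"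
    if "C2_periodic \<psi>" "\<psi> x > 0" for x
  proof -
    have "((\<lambda>y. ln (\<psi> y)) has_real_derivative deriv \<psi> x / \<psi> x) (at x)"
      using C2_periodic_has_derivative[OF that(1), of x] that(2) by (auto intro!: derivative_eq_intros)
    then have "deriv (\<lambda>y. ln (\<psi> y)) x = deriv \<psi> x / \<psi> x" by (rule DERIV_imp_deriv)
    then show ?thesis using that(2) by (simp add: abs_divide divide_less_eq)
  qed
  then show ?thesis unfolding Vcone_def by auto
qed

lemma Vcone_param_pos:
  assumes "\<psi> \<in> Vcone a"
  shows "a > 0"
proof -
  have "\<psi> 0 > 0" "\<bar>deriv \<psi> 0\<bar> < a * \<psi> 0" using assms unfolding mem_Vcone_iff by blast+
  then have "0 < a * \<psi> 0" "\<psi> 0 > 0" by linarith+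
  then show ?thesis by (rule zero_less_mult_pos2)
qed

lemma Vcone_mult:
  assumes f: "f \<in> Vcone a" and g: "g \<in> Vcone c"
  shows "(\<lambda>x. f x * g x) \<in> Vcone (a + c)"
proof -
  have cf: "C2_periodic f" "\<forall>x. f x > 0" "\<forall>x. \<bar>deriv f x\<bar> < a * f x" using f mem_Vcone_iff by auto
  have cg: "C2_periodic g" "\<forall>x. g x > 0" "\<forall>x. \<bar>deriv g x\<bar> < c * g x" using g mem_Vcone_iff by auto
  have d: "deriv (\<lambda>x. f x * g x) x = deriv f x * g x + f x * deriv g x" for x
    using C2_periodic_has_derivative[OF cf(1)] C2_periodic_has_derivative[OF cg(1)]
    by (intro DERIV_imp_deriv) (auto intro!: derivative_eq_intros)
  have "\<bar>deriv f x * g x + f x * deriv g x\<bar> < (a + c) * (f x * g x)" for x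
  proof -
    have "\<bar>deriv f x * g x + f x * deriv g x\<bar> \<le> \<bar>deriv f x\<bar> * g x + f x * \<bar>deriv g x\<bar>"
      using cf(2) cg(2) abs_triangle_ineq[of "deriv f x * g x" "f x * deriv g x"]
      by (simp add: abs_mult abs_of_pos)
    also have "\<dots> < (a * f x) * g x + f x * (c * g x)"
      using cf cg by (intro add_strict_mono mult_strict_right_mono mult_strict_left_mono) auto
    finally show ?thesis by (simp add: algebra_simps)
  qed
  then show ?thesis
    unfolding mem_Vcone_iff d using C2_periodic_mult[OF cf(1) cg(1)] cf(2) cg(2) by auto
qed

lemma Vcone_add:
  assumes f: "f \<in> Vcone a" and g: "g \<in> Vcone a"
  shows "(\<lambda>x. f x + g x) \<in> Vcone a"
proof -
  have cf: "C2_periodic f" "\<forall>x. f x > 0" "\<forall>x. \<bar>deriv f x\<bar> < a * f x" using f mem_Vcone_iff by auto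
  have cg: "C2_periodic g" "\<forall>x. g x > 0" "\<forall>x. \<bar>deriv g x\<bar> < a * g x" using g mem_Vcone_iff by auto
  have d: "deriv (\<lambda>x. f x + g x) x = deriv f x + deriv g x" for x
    using C2_periodic_has_derivative[OF cf(1)] C2_periodic_has_derivative[OF cg(1)]
    by (intro DERIV_imp_deriv) (auto intro!: derivative_eq_intros)
  have "\<bar>deriv f x + deriv g x\<bar> < a * (f x + g x)" for x
    using cf(3) cg(3) by (smt (verit) distrib_left)
  then show ?thesis
    unfolding mem_Vcone_iff d using C2_periodic_add[OF cf(1) cg(1)] cf(2) cg(2) by (auto intro: add_pos_pos)
qed

lemma Vcone_cmult:
  assumes f: "f \<in> Vcone a" and t: "t > 0"
  shows "(\<lambda>x. t * f x) \<in> Vcone a"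
proof -
  have cf: "C2_periodic f" "\<forall>x. f x > 0" "\<forall>x. \<bar>deriv f x\<bar> < a * f x" using f mem_Vcone_iff by auto
  have d: "deriv (\<lambda>x. t * f x) x = t * deriv f x" for x
    using C2_periodic_has_derivative[OF cf(1)] by (intro DERIV_imp_deriv) (auto intro!: derivative_eq_intros)
  have "\<bar>t * deriv f x\<bar> < a * (t * f x)" for x
  proof -
    have "\<bar>t * deriv f x\<bar> = t * \<bar>deriv f x\<bar>" using t by (simp add: abs_mult)
    also have "\<dots> < t * (a * f x)" using cf(3) t by simp
    finally show ?thesis by (simp add: algebra_simps)
  qed
  then show ?thesis unfolding mem_Vcone_iff d using C2_periodic_cmult[OF cf(1)] cf(2) t by auto
qed

lemma Vcone_prod:
  assumes "finite I" "I \<noteq> {}" "\<And>j. j \<in> I \<Longrightarrow> \<phi> j \<in> Vcone (a j)"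
  shows "(\<lambda>x. \<Prod>j\<in>I. \<phi> j x) \<in> Vcone (sum a I)"
  using assms
proof (induction I rule: finite_ne_induct)
  case (singleton j) then show ?case by simp
next
  case (insert i I) then show ?case
    using Vcone_mult[of "\<phi> i" "a i" "\<lambda>x. \<Prod>j\<in>I. \<phi> j x" "sum a I"] by simp
qed

lemma Vcone_prod_diff:
  assumes "finite I" "I \<noteq> {}"
    and "\<And>j. j \<in> I \<Longrightarrow> f j \<in> Vcone (a j)" "\<And>j. j \<in> I \<Longrightarrow> g j \<in> Vcone (a j)"
    and "\<And>j. j \<in> I \<Longrightarrow> (\<lambda>x. f j x - g j x) \<in> Vcone (a j + d)"
  shows "(\<lambda>x. (\<Prod>j\<in>I. f j x) - (\<Prod>j\<in>I. g j x)) \<in> Vcone (sum a I + d)"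
  using assms
proof (induction I rule: finite_ne_induct)
  case (singleton j) then show ?case by (simp add: add.commute)
next
  case (insert i I)
  let ?F = "\<lambda>x. \<Prod>j\<in>I. f j x" and ?G = "\<lambda>x. \<Prod>j\<in>I. g j x"
  have fi: "f i \<in> Vcone (a i)" and gi: "(\<lambda>x. f i x - g i x) \<in> Vcone (a i + d)"
    using insert.prems by simp_all
  have "(\<lambda>x. ?F x - ?G x) \<in> Vcone (sum a I + d)" using insert by auto
  from Vcone_mult[OF this fi]
  have 1: "(\<lambda>x. (?F x - ?G x) * f i x) \<in> Vcone (sum a (insert i I) + d)"
    using insert.hyps by (simp add: algebra_simps)
  have "?G \<in> Vcone (sum a I)" using insert Vcone_prod[of I g a] by auto
  from Vcone_mult[OF this gi]
  have 2: "(\<lambda>x. ?G x * (f i x - g i x)) \<in> Vcone (sum a (insert i I) + d)"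
    using insert.hyps by (simp add: algebra_simps)
  have "(\<lambda>x. (\<Prod>j\<in>insert i I. f j x) - (\<Prod>j\<in>insert i I. g j x))
      = (\<lambda>x. (?F x - ?G x) * f i x + ?G x * (f i x - g i x))"
    using insert.hyps by (auto simp: algebra_simps)
  then show ?case using Vcone_add[OF 1 2] by simp
qed

definition cone_scalars :: "real \<Rightarrow> (real \<Rightarrow> real) \<Rightarrow> (real \<Rightarrow> real) \<Rightarrow> real set" where
  "cone_scalars a \<psi>1 \<psi>2 = {t. t > 0 \<and> (\<lambda>x. t * \<psi>1 x - \<psi>2 x) \<in> Vcone a}"

lemma beta_cone_eq_Inf: "beta_cone a \<psi>1 \<psi>2 = Inf (cone_scalars a \<psi>1 \<psi>2)"
  unfolding beta_cone_def cone_scalars_def ..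

lemma cone_scalars_pos: "t \<in> cone_scalars a \<psi>1 \<psi>2 \<Longrightarrow> t > 0"
  unfolding cone_scalars_def by simp

lemma prod_mem_cone_scalars:
  assumes "finite I" "I \<noteq> {}"
    and "\<And>j. j \<in> I \<Longrightarrow> f j \<in> Vcone (a j)" "\<And>j. j \<in> I \<Longrightarrow> g j \<in> Vcone (a j)"
    and t: "\<And>j. j \<in> I \<Longrightarrow> t j \<in> cone_scalars (a j + d) (f j) (g j)"
  shows "(\<Prod>j\<in>I. t j) \<in> cone_scalars (sum a I + d) (\<lambda>x. \<Prod>j\<in>I. f j x) (\<lambda>x. \<Prod>j\<in>I. g j x)"
proof -
  have "(\<lambda>x. (\<Prod>j\<in>I. t j * f j x) - (\<Prod>j\<in>I. g j x)) \<in> Vcone (sum a I + d)"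
    using assms by (intro Vcone_prod_diff[where f = "\<lambda>j x. t j * f j x" and g = g])
      (auto simp: cone_scalars_def Vcone_cmult)
  moreover have "(\<Prod>j\<in>I. t j) > 0" by (intro prod_pos) (use t cone_scalars_pos in blast)
  ultimately show ?thesis unfolding cone_scalars_def by (simp add: prod.distrib)
qed

text \<open>The pointwise inequality behind cone_scalars_nonempty, with u, v, p, q the values of
  \<psi>_1, \<psi>_2, \<psi>_1', \<psi>_2' at one point.\<close>

lemma cone_diff_pointwise:
  fixes t u v p q a d :: real
  assumes v: "v > 0" and p: "\<bar>p\<bar> < a * u" and q: "\<bar>q\<bar> < a * v" and d: "d > 0" and t: "t \<ge> 0"
    and large: "(2 * a + d) * v \<le> t * d * u"
  shows "0 < t * u - v" and "\<bar>t * p - q\<bar> < (a + d) * (t * u - v)"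
proof -
  have "0 < a * v" using q by linarith
  then have a: "a > 0" using v by (rule zero_less_mult_pos2)
  have "d * (t * u - v) \<ge> 2 * a * v" using large by (simp add: algebra_simps)
  moreover have "2 * a * v > 0" using a v by simp
  ultimately have "d * (t * u - v) > 0" by linarith
  then show "0 < t * u - v" using d by (simp add: zero_less_mult_iff)
  have "\<bar>t * p - q\<bar> \<le> t * \<bar>p\<bar> + \<bar>q\<bar>" using abs_triangle_ineq4[of "t * p" q] t by (simp add: abs_mult)
  also have "\<dots> < a * (t * u) + a * v"
    using mult_left_mono[OF less_imp_le[OF p] t] q by (simp add: algebra_simps)
  also have "\<dots> \<le> (a + d) * (t * u - v)" using large by (simp add: algebra_simps)
  finally show "\<bar>t * p - q\<bar> < (a + d) * (t * u - v)" .
qed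

lemma cone_scalars_nonempty:
  assumes f: "\<psi>1 \<in> Vcone a" and g: "\<psi>2 \<in> Vcone a" and d: "d > 0"
  shows "cone_scalars (a + d) \<psi>1 \<psi>2 \<noteq> {}"
proof -
  have cf: "C2_periodic \<psi>1" "\<forall>x. \<psi>1 x > 0" "\<forall>x. \<bar>deriv \<psi>1 x\<bar> < a * \<psi>1 x" using f mem_Vcone_iff by auto
  have cg: "C2_periodic \<psi>2" "\<forall>x. \<psi>2 x > 0" "\<forall>x. \<bar>deriv \<psi>2 x\<bar> < a * \<psi>2 x" using g mem_Vcone_iff by auto
  have "\<And>x. \<psi>1 (x + 1) = \<psi>1 x" "\<And>x. \<psi>2 (x + 1) = \<psi>2 x"
    using cf(1) cg(1) unfolding C2_periodic_def by blast+
  then obtain K where K: "K > 0" "\<forall>x. \<psi>2 x \<le> K * \<psi>1 x"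
    using periodic_ratio_bounded[of \<psi>2 \<psi>1] C2_periodic_continuous[OF cf(1)]
      C2_periodic_continuous[OF cg(1)] cf(2) by blast
  have a: "a > 0" using Vcone_param_pos[OF f] .
  define t where "t = (2 * a + d) * K / d"
  have t: "t > 0" using K d a by (simp add: t_def)
  have td: "t * d = (2 * a + d) * K" using d by (simp add: t_def)
  have large: "(2 * a + d) * \<psi>2 x \<le> t * d * \<psi>1 x" for x
    unfolding td using K a d by (simp add: mult_left_mono)
  have dv: "deriv (\<lambda>x. t * \<psi>1 x - \<psi>2 x) x = t * deriv \<psi>1 x - deriv \<psi>2 x" for x
    using C2_periodic_has_derivative[OF cf(1)] C2_periodic_has_derivative[OF cg(1)]
    by (intro DERIV_imp_deriv) (auto intro!: derivative_eq_intros)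
  have "0 < t * \<psi>1 x - \<psi>2 x" "\<bar>t * deriv \<psi>1 x - deriv \<psi>2 x\<bar> < (a + d) * (t * \<psi>1 x - \<psi>2 x)" for x
    using cone_diff_pointwise[of "\<psi>2 x" "deriv \<psi>1 x" a "\<psi>1 x" "deriv \<psi>2 x" d t] cf cg d t large
    by auto
  then have "(\<lambda>x. t * \<psi>1 x - \<psi>2 x) \<in> Vcone (a + d)"
    unfolding mem_Vcone_iff dv using C2_periodic_diff[OF C2_periodic_cmult[OF cf(1)] cg(1)] by auto
  then show ?thesis using t unfolding cone_scalars_def by blast
qed

lemma beta_cone_pos:
  assumes "\<And>x. \<psi>1 x > 0" "\<And>x. \<psi>2 x > 0" "cone_scalars a \<psi>1 \<psi>2 \<noteq> {}"
  shows "beta_cone a \<psi>1 \<psi>2 > 0"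
proof -
  have "\<psi>2 0 / \<psi>1 0 \<le> beta_cone a \<psi>1 \<psi>2"
    unfolding beta_cone_eq_Inf
  proof (rule cInf_greatest[OF assms(3)])
    fix t assume "t \<in> cone_scalars a \<psi>1 \<psi>2"
    then have "t * \<psi>1 0 - \<psi>2 0 > 0" unfolding cone_scalars_def mem_Vcone_iff by blast
    then show "\<psi>2 0 / \<psi>1 0 \<le> t" using assms(1) by (simp add: divide_le_eq)
  qed
  moreover have "\<psi>2 0 / \<psi>1 0 > 0" using assms by simp
  ultimately show ?thesis by linarith
qed

lemma ln_Inf_le_sum_ln_Inf:
  fixes S :: "'i \<Rightarrow> real set" and T :: "real set"
  assumes I: "finite I"
    and S: "\<And>j. j \<in> I \<Longrightarrow> S j \<noteq> {}" "\<And>j. j \<in> I \<Longrightarrow> Inf (S j) > 0"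
      "\<And>j s. j \<in> I \<Longrightarrow> s \<in> S j \<Longrightarrow> s > 0"
    and T: "\<And>s. s \<in> T \<Longrightarrow> s > 0" "Inf T > 0"
    and prod_mem: "\<And>t. (\<And>j. j \<in> I \<Longrightarrow> t j \<in> S j) \<Longrightarrow> (\<Prod>j\<in>I. t j) \<in> T"
  shows "ln (Inf T) \<le> (\<Sum>j\<in>I. ln (Inf (S j)))"
proof (rule field_le_epsilon)
  fix e :: real assume e: "e > 0"
  define e' where "e' = e / (card I + 1)"
  have e': "e' > 0" "card I * e' \<le> e" using e by (auto simp: e'_def field_simps)
  have "\<exists>s\<in>S j. s < Inf (S j) * exp e'" if "j \<in> I" for j
  proof (rule cInf_lessD[OF S(1)[OF that]])
    show "Inf (S j) < Inf (S j) * exp e'" using S(2)[OF that] e'(1) by simp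
  qed
  then obtain t where t: "\<And>j. j \<in> I \<Longrightarrow> t j \<in> S j \<and> t j < Inf (S j) * exp e'" by metis
  have tpos: "t j > 0" if "j \<in> I" for j using t S(3) that by blast
  have "Inf T \<le> (\<Prod>j\<in>I. t j)"
    using prod_mem[of t] t T(1) by (intro cInf_lower bdd_belowI[of T 0]) (auto simp: less_imp_le)
  then have "ln (Inf T) \<le> ln (\<Prod>j\<in>I. t j)" using T(2) by simp
  also have "\<dots> = (\<Sum>j\<in>I. ln (t j))" by (rule ln_prod[OF I]) (use tpos in force)
  also have "\<dots> \<le> (\<Sum>j\<in>I. ln (Inf (S j)) + e')"
  proof (rule sum_mono)
    fix j assume j: "j \<in> I"
    have "ln (t j) \<le> ln (Inf (S j) * exp e')" using t[OF j] tpos[OF j] by simp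
    then show "ln (t j) \<le> ln (Inf (S j)) + e'" using S(2)[OF j] by (simp add: ln_mult)
  qed
  also have "\<dots> \<le> (\<Sum>j\<in>I. ln (Inf (S j))) + e" using e' by (simp add: sum.distrib)
  finally show "ln (Inf T) \<le> (\<Sum>j\<in>I. ln (Inf (S j))) + e" .
qed

lemma ln_beta_cone_prod_le:
  fixes I :: "'i set"
  assumes I: "finite I" "I \<noteq> {}" and d: "d > 0"
    and f_mem: "\<And>j. j \<in> I \<Longrightarrow> f j \<in> Vcone (a j)" and g_mem: "\<And>j. j \<in> I \<Longrightarrow> g j \<in> Vcone (a j)"
  shows "ln (beta_cone (sum a I + d) (\<lambda>x. \<Prod>j\<in>I. f j x) (\<lambda>x. \<Prod>j\<in>I. g j x))
     \<le> (\<Sum>j\<in>I. ln (beta_cone (a j + d) (f j) (g j)))"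
  unfolding beta_cone_eq_Inf
proof (rule ln_Inf_le_sum_ln_Inf[OF I(1)])
  let ?S = "\<lambda>j. cone_scalars (a j + d) (f j) (g j)"
  let ?T = "cone_scalars (sum a I + d) (\<lambda>x. \<Prod>j\<in>I. f j x) (\<lambda>x. \<Prod>j\<in>I. g j x)"
  have pos: "f j x > 0" "g j x > 0" if "j \<in> I" for j x
    using f_mem[OF that] g_mem[OF that] mem_Vcone_iff by auto
  show S: "?S j \<noteq> {}" if "j \<in> I" for j
    using cone_scalars_nonempty[OF f_mem[OF that] g_mem[OF that] d] .
  show "Inf (?S j) > 0" if "j \<in> I" for j
    using beta_cone_pos[OF pos(1,2)[OF that] S[OF that]] by (simp add: beta_cone_eq_Inf)
  show prod_mem: "(\<Prod>j\<in>I. t j) \<in> ?T" if "\<And>j. j \<in> I \<Longrightarrow> t j \<in> ?S j" for t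
    using prod_mem_cone_scalars[where f = f and g = g and a = a and t = t, OF I f_mem g_mem that] .
  have "(\<Prod>j\<in>I. SOME s. s \<in> ?S j) \<in> ?T"
    by (rule prod_mem) (use S in \<open>simp add: some_in_eq\<close>)
  then have "?T \<noteq> {}" by blast
  moreover have "(\<Prod>j\<in>I. f j x) > 0" "(\<Prod>j\<in>I. g j x) > 0" for x
    using pos by (simp_all add: prod_pos)
  ultimately show "Inf ?T > 0"
    using beta_cone_pos[of "\<lambda>x. \<Prod>j\<in>I. f j x" "\<lambda>x. \<Prod>j\<in>I. g j x"]
    by (simp add: beta_cone_eq_Inf)
qed (simp_all add: cone_scalars_pos)

lemma beta_cone_one:
  assumes "b > 0"
  shows "beta_cone b (\<lambda>x. 1) (\<lambda>x. 1) = 1"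
proof -
  have "deriv (\<lambda>x. c) x = 0" for c x :: real by (rule DERIV_imp_deriv) (rule DERIV_const)
  then have "cone_scalars b (\<lambda>x. 1) (\<lambda>x. 1) = {1<..}"
    using assms C2_periodic_const unfolding cone_scalars_def mem_Vcone_iff by auto
  then show ?thesis unfolding beta_cone_eq_Inf by simp
qed

theorem propositionA5:
  fixes M :: nat and a :: "nat \<Rightarrow> real" and b :: real
    and \<phi>1 \<phi>2 :: "nat \<Rightarrow> real \<Rightarrow> real"
  assumes apos: "\<And>j. j \<in> {1..M} \<Longrightarrow> a j > 0"
    and phi1: "\<And>j. j \<in> {1..M} \<Longrightarrow> \<phi>1 j \<in> Vcone (a j)"
    and phi2: "\<And>j. j \<in> {1..M} \<Longrightarrow> \<phi>2 j \<in> Vcone (a j)"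
    and b: "b > (\<Sum>j=1..M. a j)"
  shows "theta_cone b (\<lambda>x. \<Prod>j=1..M. \<phi>1 j x) (\<lambda>x. \<Prod>j=1..M. \<phi>2 j x)
           \<le> (\<Sum>j=1..M. theta_cone (b - (\<Sum>k\<in>{1..M} - {j}. a k)) (\<phi>1 j) (\<phi>2 j))"
proof (cases "M = 0")
  case True
  then show ?thesis using b beta_cone_one[of b] unfolding theta_cone_def by simp
next
  case False
  define d where "d = b - sum a {1..M}"
  have I: "finite {1..M}" "{1..M} \<noteq> {}" using False by auto
  have d: "d > 0" using b by (simp add: d_def)
  have bj: "b - (\<Sum>k\<in>{1..M} - {j}. a k) = a j + d" if "j \<in> {1..M}" for j
    using that by (simp add: d_def sum_diff1)
  have "(\<Sum>j=1..M. theta_cone (b - (\<Sum>k\<in>{1..M} - {j}. a k)) (\<phi>1 j) (\<phi>2 j))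
      = (\<Sum>j=1..M. ln (beta_cone (a j + d) (\<phi>1 j) (\<phi>2 j)))
        + (\<Sum>j=1..M. ln (beta_cone (a j + d) (\<phi>2 j) (\<phi>1 j)))"
    unfolding theta_cone_def sum.distrib[symmetric] by (rule sum.cong[OF refl]) (simp only: bj)
  moreover have "theta_cone b (\<lambda>x. \<Prod>j=1..M. \<phi>1 j x) (\<lambda>x. \<Prod>j=1..M. \<phi>2 j x)
      = ln (beta_cone (sum a {1..M} + d) (\<lambda>x. \<Prod>j=1..M. \<phi>1 j x) (\<lambda>x. \<Prod>j=1..M. \<phi>2 j x))
        + ln (beta_cone (sum a {1..M} + d) (\<lambda>x. \<Prod>j=1..M. \<phi>2 j x) (\<lambda>x. \<Prod>j=1..M. \<phi>1 j x))"
    unfolding theta_cone_def d_def by simp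
  ultimately show ?thesis
    using ln_beta_cone_prod_le[where f = \<phi>1 and g = \<phi>2 and a = a, OF I d phi1 phi2]
      ln_beta_cone_prod_le[where f = \<phi>2 and g = \<phi>1 and a = a, OF I d phi2 phi1]
    by linarith
qed

end
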